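(* Let $A$ be the set of triples $(n,\ell,m)\in\mathbb{Z}^3$ with $m,n>0$, $4\frac nN m-\ell^2>0$ and $$\min_{m_1\in N\mathbb{Z},\ s\in\mathbb{Z},\ s(s+1)\equiv0\bmod m_1}\left[\left(\frac{m_1\ell+2ms+m}{m}\right)^2+\frac{m_1^2}{m^2}\left(4\frac nNm-\ell^2\right)\right]\ge1.$$ If $(n,\ell,m)\in A$, then the partition function $\widetilde\Phi_k^{-1}$ does not have poles in the region bounded by the contours $\mathcal{C}$ and $\mathcal{C}'$.
   Context: $\widetilde\Phi_k^{-1}$ is the $\mathbb{Z}_N$ CHL dyon partition function; its poles (double zeros of $\widetilde\Phi_k$) lie on $n_2(\sigma\tau-z^2)+jz+n_1\sigma-m_1\tau+m_2=0$ with $m_1\in N\mathbb{Z}$, $n_1,m_2,n_2\in\mathbb{Z}$, $j\in2\mathbb{Z}+1$, $m_1n_1+m_2n_2+j^2/4=1/4$. The attractor contour $\mathcal{C}$ is $\mathrm{Im}\,\tau=\frac{2n}{N\varepsilon}$, $\mathrm{Im}\,\sigma=\frac{2m}{\varepsilon}$, $\mathrm{Im}\,z=-\frac{\ell}{\varepsilon}$, $0\le\mathrm{Re}\,\tau,\mathrm{Re}\,z<1$, $0\le\mathrm{Re}\,\sigma<N$, with $\varepsilon>0$ small; $\mathcal{C}'$ is the same contour but with $\mathrm{Im}\,\tau\to\infty$ ($\mathrm{Im}\,\sigma$, $\mathrm{Im}\,z$ fixed). (Poles lying exactly on $\mathcal{C}$ have vanishing residue and are harmless.) *)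

theory Defs
  imports "HOL-Analysis.Analysis" "HOL-Number_Theory.Cong"
begin

text \<open>The set A of triples (n, l, m) (N is the order of the CHL orbifold Z_N).
  The minimum over m1 in N*Z and s with s(s+1) = 0 mod m1 being at least 1 is
  written out as: every value of the bracket is at least 1.\<close>
definition A_set :: "nat \<Rightarrow> (int \<times> int \<times> int) set" where
  "A_set N = {(n, l, m). m > 0 \<and> n > 0 \<and>
      4 * (real_of_int n / real N) * real_of_int m - (real_of_int l)^2 > 0 \<and>
      (\<forall>m1 s :: int. int N dvd m1 \<and> [s * (s + 1) = 0] (mod m1) \<longrightarrow>
         ((real_of_int (m1 * l + 2 * m * s + m)) / real_of_int m)^2
         + (real_of_int m1)^2 / (real_of_int m)^2
             * (4 * (real_of_int n / real N) * real_of_int m - (real_of_int l)^2) \<ge> 1)}"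

text \<open>(tau, sigma, z) lies on the zero divisor of Phi_k labelled by (m1, n1, m2, n2, j).\<close>
definition on_divisor :: "nat \<Rightarrow> complex \<Rightarrow> complex \<Rightarrow> complex \<Rightarrow> int \<Rightarrow> int \<Rightarrow> int \<Rightarrow> int \<Rightarrow> int \<Rightarrow> bool" where
  "on_divisor N \<tau> \<sigma> z m1 n1 m2 n2 j \<longleftrightarrow>
     int N dvd m1 \<and> odd j \<and>
     real_of_int (m1 * n1 + m2 * n2) + (real_of_int j)^2 / 4 = 1 / 4 \<and>
     of_int n2 * (\<sigma> * \<tau> - z^2) + of_int j * z + of_int n1 * \<sigma> - of_int m1 * \<tau> + of_int m2 = 0"

text \<open>A pole of the partition function at (tau, sigma, z) that is a genuine pole in the
  tau-variable, i.e. lies on a divisor whose equation actually depends on tau at the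
  given (sigma, z) (coefficient n2*sigma - m1 of tau nonzero).  Divisors with
  n2*sigma - m1 = 0 contain the whole tau-line and hence lie on the contour C itself
  (such poles are harmless by the standing assumption).\<close>
definition tau_pole :: "nat \<Rightarrow> complex \<Rightarrow> complex \<Rightarrow> complex \<Rightarrow> bool" where
  "tau_pole N \<tau> \<sigma> z \<longleftrightarrow>
     (\<exists>m1 n1 m2 n2 j. on_divisor N \<tau> \<sigma> z m1 n1 m2 n2 j \<and> of_int n2 * \<sigma> - of_int m1 \<noteq> 0)"

text \<open>The region strictly between the contour C (Im tau = 2n/(N eps)) and C'
  (Im tau = infinity), at fixed Im sigma = 2m/eps, Im z = -l/eps.\<close>
definition between_C_C' :: "nat \<Rightarrow> int \<Rightarrow> int \<Rightarrow> int \<Rightarrow> real \<Rightarrow> complex \<Rightarrow> complex \<Rightarrow> complex \<Rightarrow> bool" where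
  "between_C_C' N n l m \<epsilon> \<tau> \<sigma> z \<longleftrightarrow>
     Im \<tau> > 2 * real_of_int n / (real N * \<epsilon>) \<and>
     Im \<sigma> = 2 * real_of_int m / \<epsilon> \<and>
     Im z = - real_of_int l / \<epsilon> \<and>
     0 \<le> Re \<tau> \<and> Re \<tau> < 1 \<and> 0 \<le> Re z \<and> Re z < 1 \<and> 0 \<le> Re \<sigma> \<and> Re \<sigma> < real N"

end

theory Submission
  imports Defs
begin

text \<open>If n2 \<noteq> 0, completing the square turns the divisor into
  (n2 tau + n1)(n2 sigma - m1) - (n2 z - j/2)^2 = -1/4. As the right-hand side is real, the
  imaginary parts of these three variables, which form n2^2 times the imaginary-part matrix of
  (tau, z, sigma), can have determinant at most 1/4; but between the contours
  Im tau Im sigma - (Im z)^2 exceeds (4 n m / N - l^2) / eps^2 > 1 once eps is small.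
  If n2 = 0 the divisor is linear in tau and fixes Im tau = (2 n1 m - j l) / (m1 eps); writing
  j = 2 s + 1, the bracket in the definition of A at (m1, s) is at least 1 exactly when this
  value is at most 2 n / (N eps), so the pole lies on or below C.\<close>

lemma det_nonpos_if_orthogonal_to_definite:
  fixes a b c y1 y2 y3 :: real
  assumes orth: "a * y3 + c * y1 = 2 * b * y2" and definite: "y2^2 < y1 * y3"
  shows "a * c \<le> b^2"
proof -
  have "4 * (a * c) * (y1 * y3) \<le> (a * y3 + c * y1)^2"
    using sum_squares_ge_zero[of "a * y3 - c * y1" 0] by (simp add: power2_eq_square algebra_simps)
  also have "\<dots> = 4 * b^2 * y2^2"
    using orth by (simp add: power2_eq_square algebra_simps)
  also have "\<dots> \<le> 4 * b^2 * (y1 * y3)"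
    using definite by (intro mult_left_mono) auto
  finally show ?thesis
    using definite by (smt (verit) mult_le_cancel_right_pos zero_le_power2)
qed

lemma Re_square_form_le_if_Im_zero:
  fixes T S Z :: complex
  assumes "Im (T * S - Z^2) = 0" and "(Im Z)^2 < Im T * Im S"
  shows "Re (T * S - Z^2) \<le> (Im Z)^2 - Im T * Im S"
proof -
  have "Re T * Re S \<le> (Re Z)^2"
    using assms by (intro det_nonpos_if_orthogonal_to_definite[of _ "Im S" _ "Im T" _ "Im Z"])
      (auto simp: power2_eq_square algebra_simps)
  then show ?thesis by (simp add: power2_eq_square)
qed

lemma on_divisor_discriminant:
  assumes "on_divisor N \<tau> \<sigma> z m1 n1 m2 n2 j"
  shows "4 * (m1 * n1 + m2 * n2) + j^2 = 1"
proof -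
  have "real_of_int (4 * (m1 * n1 + m2 * n2) + j^2) = 1"
    using assms unfolding on_divisor_def by simp
  then show ?thesis by (simp only: of_int_eq_1_iff)
qed

lemma on_divisor_completed_square:
  assumes "on_divisor N \<tau> \<sigma> z m1 n1 m2 n2 j"
  shows "(of_int n2 * \<tau> + of_int n1) * (of_int n2 * \<sigma> - of_int m1)
           - (of_int n2 * z - of_int j / 2)^2 = - 1 / 4"
proof -
  have disc: "4 * (of_int m1 * of_int n1 + of_int m2 * of_int n2) + (of_int j)^2 = (1 :: complex)"
    using arg_cong[OF on_divisor_discriminant[OF assms], of of_int] by simp
  have eq: "of_int n2 * (\<sigma> * \<tau> - z^2) + of_int j * z + of_int n1 * \<sigma> - of_int m1 * \<tau> + of_int m2 = 0"
    using assms unfolding on_divisor_def by auto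
  have "(of_int n2 * \<tau> + of_int n1) * (of_int n2 * \<sigma> - of_int m1) - (of_int n2 * z - of_int j / 2)^2
      = of_int n2 * (of_int n2 * (\<sigma> * \<tau> - z^2) + of_int j * z + of_int n1 * \<sigma> - of_int m1 * \<tau> + of_int m2)
        - (4 * (of_int m1 * of_int n1 + of_int m2 * of_int n2) + (of_int j)^2) / 4"
    by (simp add: power2_eq_square field_simps)
  then show ?thesis using disc eq by simp
qed

lemma on_divisor_Im_det_le:
  assumes "on_divisor N \<tau> \<sigma> z m1 n1 m2 n2 j" and "n2 \<noteq> 0"
  shows "Im \<tau> * Im \<sigma> - (Im z)^2 \<le> 1 / 4"
proof (rule ccontr)
  define d where "d = Im \<tau> * Im \<sigma> - (Im z)^2"
  assume "\<not> ?thesis"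
  then have d: "d > 1 / 4" unfolding d_def by simp
  define T S Z where "T = of_int n2 * \<tau> + of_int n1" and "S = of_int n2 * \<sigma> - of_int m1"
    and "Z = of_int n2 * z - of_int j / 2"
  have "(real_of_int n2)^2 \<ge> 1"
    using assms(2) by (metis of_int_1_le_iff of_int_power zero_less_power2 int_one_le_iff_zero_less)
  then have d_le: "d \<le> (real_of_int n2)^2 * d"
    using d mult_right_mono[of 1 "(real_of_int n2)^2" d] by simp
  have Im_det: "Im T * Im S - (Im Z)^2 = (real_of_int n2)^2 * d"
    unfolding T_def S_def Z_def d_def by (simp add: power2_eq_square algebra_simps)
  have "(Im Z)^2 < Im T * Im S" using Im_det d_le d by linarith
  moreover have "T * S - Z^2 = - 1 / 4"
    unfolding T_def S_def Z_def by (rule on_divisor_completed_square[OF assms(1)])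
  ultimately have "- 1 / 4 \<le> (Im Z)^2 - Im T * Im S"
    using Re_square_form_le_if_Im_zero[of T S Z] by simp
  with Im_det d_le d show False by linarith
qed

lemma A_set_linear_divisor_bound:
  fixes n l m m1 n1 j :: int
  assumes A: "(n, l, m) \<in> A_set N" and "int N dvd m1" and disc: "4 * (m1 * n1) + j^2 = 1"
  shows "real_of_int m1 * (2 * n1 * m - j * l) \<le> (real_of_int m1)^2 * (2 * n / N)"
proof -
  define c0 where "c0 = 4 * (real_of_int n / real N) * real_of_int m - (real_of_int l)^2"
  txt \<open>The odd j = 2 k + 1 provides the s = k of the minimum defining A_set,
    because k (k + 1) = - m1 n1.\<close>
  have "j^2 = 2 * (- 2 * (m1 * n1)) + 1"
    using disc by linarith
  then have "odd (j^2)" by simp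
  then have "odd j" by simp
  then obtain k where j: "j = 2 * k + 1"
    by (auto elim: oddE)
  have "k * (k + 1) = - (m1 * n1)"
    using disc unfolding j by (simp add: algebra_simps power2_eq_square)
  then have "[k * (k + 1) = 0] (mod m1)" by (simp add: cong_0_iff)
  then have "((real_of_int (m1 * l + 2 * m * k + m)) / real_of_int m)^2
             + (real_of_int m1)^2 / (real_of_int m)^2 * c0 \<ge> 1"
    using A \<open>int N dvd m1\<close> unfolding A_set_def c0_def by auto
  moreover have "m > 0" using A unfolding A_set_def by simp
  ultimately have bracket: "(real_of_int m1 * l + real_of_int m * j)^2 + (real_of_int m1)^2 * c0 \<ge> (real_of_int m)^2"
    unfolding j by (simp add: field_simps)
  have j_sq: "(real_of_int j)^2 = 1 - 4 * real_of_int m1 * real_of_int n1"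
    using arg_cong[OF disc, of real_of_int] by simp
  have "(real_of_int m1 * l + real_of_int m * j)^2
      = (real_of_int m1 * l)^2 + 2 * real_of_int m1 * l * m * j + (real_of_int m)^2 * (real_of_int j)^2"
    by (simp add: power2_sum power_mult_distrib)
  then have "(real_of_int m1 * l + real_of_int m * j)^2 + (real_of_int m1)^2 * c0 - (real_of_int m)^2
      = 2 * real_of_int m * ((real_of_int m1)^2 * (2 * n / N) - real_of_int m1 * (2 * n1 * m - j * l))"
    unfolding j_sq c0_def by (simp add: power2_eq_square algebra_simps)
  with bracket have "0 \<le> 2 * real_of_int m * ((real_of_int m1)^2 * (2 * n / N) - real_of_int m1 * (2 * n1 * m - j * l))"
    by linarith
  with \<open>m > 0\<close> show ?thesis by (simp add: zero_le_mult_iff)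
qed

lemma between_C_C'_Im_det_gt_1:
  fixes n l m :: int
  assumes "between_C_C' N n l m \<epsilon> \<tau> \<sigma> z" and "m > 0" and "\<epsilon> > 0"
    and "\<epsilon>^2 < 4 * (real_of_int n / real N) * real_of_int m - (real_of_int l)^2"
  shows "Im \<tau> * Im \<sigma> - (Im z)^2 > 1"
proof -
  have Im_\<tau>: "Im \<tau> > 2 * real_of_int n / (real N * \<epsilon>)" and Im_\<sigma>: "Im \<sigma> = 2 * real_of_int m / \<epsilon>"
    and Im_z: "Im z = - real_of_int l / \<epsilon>"
    using assms(1) unfolding between_C_C'_def by auto
  have "Im \<tau> * Im \<sigma> > 2 * real_of_int n / (real N * \<epsilon>) * Im \<sigma>"
    using Im_\<tau> Im_\<sigma> assms(2,3) by (intro mult_strict_right_mono) auto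
  also have "2 * real_of_int n / (real N * \<epsilon>) * Im \<sigma> = 4 * (real_of_int n / real N) * real_of_int m / \<epsilon>^2"
    using Im_\<sigma> by (simp add: power2_eq_square)
  finally have "Im \<tau> * Im \<sigma> - (Im z)^2
      > (4 * (real_of_int n / real N) * real_of_int m - (real_of_int l)^2) / \<epsilon>^2"
    using Im_z by (simp add: power_divide diff_divide_distrib)
  moreover have "(4 * (real_of_int n / real N) * real_of_int m - (real_of_int l)^2) / \<epsilon>^2 > 1"
    using assms(3,4) by simp
  ultimately show ?thesis by linarith
qed

lemma not_between_C_C'_on_linear_divisor:
  fixes n l m :: int
  assumes "(n, l, m) \<in> A_set N" and "on_divisor N \<tau> \<sigma> z m1 n1 m2 0 j" and "m1 \<noteq> 0"
    and "\<epsilon> > 0"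
  shows "\<not> between_C_C' N n l m \<epsilon> \<tau> \<sigma> z"
proof
  assume "between_C_C' N n l m \<epsilon> \<tau> \<sigma> z"
  then have Im_\<tau>: "Im \<tau> > 2 * real_of_int n / (real N * \<epsilon>)" and Im_\<sigma>: "Im \<sigma> = 2 * real_of_int m / \<epsilon>"
    and Im_z: "Im z = - real_of_int l / \<epsilon>"
    unfolding between_C_C'_def by auto
  have "of_int j * z + of_int n1 * \<sigma> - of_int m1 * \<tau> + of_int m2 = 0"
    using assms(2) unfolding on_divisor_def by simp
  from arg_cong[OF this, of Im] have "real_of_int m1 * (Im \<tau> * \<epsilon>) = 2 * n1 * m - j * l"
    using Im_\<sigma> Im_z assms(4) by (simp add: field_simps)
  then have "(real_of_int m1)^2 * (Im \<tau> * \<epsilon>) = real_of_int m1 * (2 * n1 * m - j * l)"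
    by (simp add: power2_eq_square mult.assoc)
  also have "\<dots> \<le> (real_of_int m1)^2 * (2 * n / N)"
    using assms(2) on_divisor_discriminant[OF assms(2)] unfolding on_divisor_def
    by (intro A_set_linear_divisor_bound[OF assms(1)]) simp_all
  finally have upper: "(real_of_int m1)^2 * (Im \<tau> * \<epsilon>) \<le> (real_of_int m1)^2 * (2 * n / N)" .
  have "2 * n / N < Im \<tau> * \<epsilon>"
    using mult_strict_right_mono[OF Im_\<tau> assms(4)] assms(4) by simp
  then have "(real_of_int m1)^2 * (2 * n / N) < (real_of_int m1)^2 * (Im \<tau> * \<epsilon>)"
    using assms(3) by (intro mult_strict_left_mono) auto
  with upper show False by linarith
qed

theorem propositionB1:
  fixes N :: nat and n l m :: int
  assumes "N \<ge> 1"
    and "(n, l, m) \<in> A_set N"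
  shows "\<exists>\<epsilon>0 > 0. \<forall>\<epsilon>. 0 < \<epsilon> \<and> \<epsilon> < \<epsilon>0 \<longrightarrow>
           \<not> (\<exists>\<tau> \<sigma> z. between_C_C' N n l m \<epsilon> \<tau> \<sigma> z \<and> tau_pole N \<tau> \<sigma> z)"
proof -
  define c0 where "c0 = 4 * (real_of_int n / real N) * real_of_int m - (real_of_int l)^2"
  have "m > 0" and "c0 > 0"
    using assms(2) unfolding A_set_def c0_def by auto
  show ?thesis
  proof (intro exI[of _ "min 1 c0"] conjI allI impI notI)
    show "min 1 c0 > 0" using \<open>c0 > 0\<close> by simp
    fix \<epsilon> :: real
    assume "0 < \<epsilon> \<and> \<epsilon> < min 1 c0"
    then have "\<epsilon> > 0" and "\<epsilon> < 1" and "\<epsilon> < c0" by auto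
    have "\<epsilon> * \<epsilon> < \<epsilon> * 1"
      using \<open>\<epsilon> < 1\<close> \<open>\<epsilon> > 0\<close> by (rule mult_strict_left_mono)
    with \<open>\<epsilon> < c0\<close> have "\<epsilon>^2 < c0" unfolding power2_eq_square by linarith
    assume "\<exists>\<tau> \<sigma> z. between_C_C' N n l m \<epsilon> \<tau> \<sigma> z \<and> tau_pole N \<tau> \<sigma> z"
    then obtain \<tau> \<sigma> z m1 n1 m2 n2 j where between: "between_C_C' N n l m \<epsilon> \<tau> \<sigma> z"
      and divisor: "on_divisor N \<tau> \<sigma> z m1 n1 m2 n2 j" and "of_int n2 * \<sigma> - of_int m1 \<noteq> 0"
      unfolding tau_pole_def by blast
    show False
    proof (cases "n2 = 0")
      case True
      with \<open>of_int n2 * \<sigma> - of_int m1 \<noteq> 0\<close> have "m1 \<noteq> 0" by simp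
      with True divisor between \<open>\<epsilon> > 0\<close> show False
        using not_between_C_C'_on_linear_divisor[OF assms(2)] by blast
    next
      case False
      with divisor between \<open>m > 0\<close> \<open>\<epsilon> > 0\<close> \<open>\<epsilon>^2 < c0\<close> show False
        using on_divisor_Im_det_le between_C_C'_Im_det_gt_1 unfolding c0_def by fastforce
    qed
  qed
qed

end
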